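(* Let $\mathcal{V}_R:\mathcal{B}(\mathcal{H}_R)\to\mathcal{B}(\mathcal{H}_{R'})$ and $\mathcal{W}_A:\mathcal{B}(\mathcal{H}_A)\to\mathcal{B}(\mathcal{H}_{A'})$ be local isometric channels, $\mathcal{V}_R(X)=V X V^\dagger$, $\mathcal{W}_A(Y)=WYW^\dagger$ with $V,W$ isometries, that jointly commute with the $G$-twirl, i.e. $(\mathcal{V}_R\otimes\mathcal{W}_A)\circ\mathcal{G}_{RA}=\mathcal{G}_{R'A'}\circ(\mathcal{V}_R\otimes\mathcal{W}_A)$. Then $H_{\mathcal{V}(\eta)}(\mathcal{W}(\rho))=H_\eta(\rho)$ for every pair of quantum states $\eta$ on $\mathcal{H}_R$ and $\rho$ on $\mathcal{H}_A$.
   Context: $G$ is a compact group with normalized Haar measure $dg$. Each finite-dimensional quantum system $X$ (here $R,A,R',A'$) carries a continuous unitary representation $U_X(g)$ on $\mathcal{H}_X$; bipartite systems carry the tensor product representation. The $G$-twirl on a system $X$ is $\mathcal{G}(M)=\int dg\, U_X(g) M U_X(g)^\dagger$; in particular $\mathcal{G}_{RA}(M)=\int dg\,(U_R(g)\otimes U_A(g))M(U_R(g)\otimes U_A(g))^\dagger$. For a positive operator $\Omega_{RA}$, the conditional min-entropy is $H_{\min}(R|A)_\Omega=-\log_2\inf_{X_A\ge 0}\{\mathrm{tr}[X_A]:\mathbb{1}_R\otimes X_A\ge\Omega_{RA}\}$. For a state $\eta$ on $R$ and a state $\tau$ on $A$, $H_\eta(\tau):=H_{\min}(R|A)_{\mathcal{G}(\eta\otimes\tau)}$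 (and analogously for $R',A'$). *)

theory Defs
  imports "HOL-Probability.Probability" "Jordan_Normal_Form.Schur_Decomposition"
begin

(* Matrices are JNF complex matrices; a d-dimensional Hilbert space is C^d. *)

definition mtrace :: "complex mat \<Rightarrow> complex" where
  "mtrace A = (\<Sum>i<dim_row A. A $$ (i, i))"

(* Kronecker (tensor) product; the first factor is the first tensor slot. *)
definition kron :: "complex mat \<Rightarrow> complex mat \<Rightarrow> complex mat" where
  "kron A B = mat (dim_row A * dim_row B) (dim_col A * dim_col B)
     (\<lambda>(i, j). A $$ (i div dim_row B, j div dim_col B) * B $$ (i mod dim_row B, j mod dim_col B))"

definition psd :: "nat \<Rightarrow> complex mat \<Rightarrow> bool" where
  "psd n A \<longleftrightarrow> A \<in> carrier_mat n n \<and> mat_adjoint A = A \<and>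
     (\<forall>v \<in> carrier_vec n. 0 \<le> Re (mult_mat_vec A v \<bullet>c v))"

definition is_state :: "nat \<Rightarrow> complex mat \<Rightarrow> bool" where
  "is_state n \<rho> \<longleftrightarrow> psd n \<rho> \<and> mtrace \<rho> = 1"

definition isometry :: "nat \<Rightarrow> nat \<Rightarrow> complex mat \<Rightarrow> bool" where
  "isometry m n V \<longleftrightarrow> V \<in> carrier_mat m n \<and> mat_adjoint V * V = 1\<^sub>m n"

definition conj_by :: "complex mat \<Rightarrow> complex mat \<Rightarrow> complex mat" where
  "conj_by V X = V * X * mat_adjoint V"

(* compact (Hausdorff) topological group, written additively as an Isabelle group_add type,
   with normalized Haar measure mu: a Borel probability measure invariant under left translation *)
definition haar_prob :: "'g :: {topological_group_add, t2_space} measure \<Rightarrow> bool" where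
  "haar_prob mu \<longleftrightarrow> compact (UNIV :: 'g set) \<and> sets mu = sets borel \<and> prob_space mu \<and>
     (\<forall>g. \<forall>A \<in> sets borel. measure mu ((\<lambda>h. g + h) ` A) = measure mu A)"

definition unitary_rep :: "nat \<Rightarrow> ('g :: {topological_group_add, t2_space} \<Rightarrow> complex mat) \<Rightarrow> bool" where
  "unitary_rep d U \<longleftrightarrow>
     (\<forall>g. U g \<in> carrier_mat d d \<and> mat_adjoint (U g) * U g = 1\<^sub>m d) \<and>
     (\<forall>g h. U (g + h) = U g * U h) \<and> U 0 = 1\<^sub>m d \<and>
     (\<forall>i<d. \<forall>j<d. continuous_on UNIV (\<lambda>g. U g $$ (i, j)))"

definition twirl :: "'g measure \<Rightarrow> ('g \<Rightarrow> complex mat) \<Rightarrow> nat \<Rightarrow> complex mat \<Rightarrow> complex mat" where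
  "twirl mu U d M = mat d d (\<lambda>(i, j). \<integral>g. (U g * M * mat_adjoint (U g)) $$ (i, j) \<partial>mu)"

(* conditional min-entropy H_min(R|A)_\<Omega>, R of dimension dR, A of dimension dA *)
definition Hmin :: "nat \<Rightarrow> nat \<Rightarrow> complex mat \<Rightarrow> real" where
  "Hmin dR dA \<Omega> = - log 2 (Inf {Re (mtrace X) | X. psd dA X \<and> psd (dR * dA) (kron (1\<^sub>m dR) X - \<Omega>)})"

(* H_\<eta>(\<tau>) := H_min(R|A) of G_RA(\<eta> \<otimes> \<tau>) *)
definition Hq :: "'g measure \<Rightarrow> ('g \<Rightarrow> complex mat) \<Rightarrow> ('g \<Rightarrow> complex mat) \<Rightarrow> nat \<Rightarrow> nat
    \<Rightarrow> complex mat \<Rightarrow> complex mat \<Rightarrow> real" where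
  "Hq mu UR UA dR dA \<eta> \<tau> = Hmin dR dA (twirl mu (\<lambda>g. kron (UR g) (UA g)) (dR * dA) (kron \<eta> \<tau>))"

end

(* The commutation hypothesis turns the left-hand side into the min-entropy of K \<Omega> K^\<dagger>,
   where K = V \<otimes> W and \<Omega> is the twirled product state, so it suffices that H_min(R|A) is
   invariant under local isometries; the Haar measure and the representations play no further role.
   If X is feasible for \<Omega>, then W X W^\<dagger> is feasible for K \<Omega> K^\<dagger> with the same trace, since
     1 \<otimes> W X W^\<dagger> - K \<Omega> K^\<dagger> = (P \<otimes> W)(1 \<otimes> X)(P \<otimes> W)^\<dagger> + K (1 \<otimes> X - \<Omega>) K^\<dagger>
   with P = 1 - V V^\<dagger>. Conversely, conjugating by K^\<dagger> (using K^\<dagger> K = 1) shows that if X' is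
   feasible for K \<Omega> K^\<dagger>, then W^\<dagger> X' W is feasible for \<Omega>, and its trace tr (X' W W^\<dagger>) is at
   most tr X'. So both SDPs have the same optimal value. *)

theory Submission
  imports Defs
begin

lemma dim_row_mat_adjoint [simp]: "dim_row (mat_adjoint A) = dim_col A"
  and dim_col_mat_adjoint [simp]: "dim_col (mat_adjoint A) = dim_row A"
  unfolding mat_adjoint_def by auto

lemma mat_adjoint_carrier_mat [simp]: "A \<in> carrier_mat m n \<Longrightarrow> mat_adjoint A \<in> carrier_mat n m"
  by auto

lemma index_mat_adjoint [simp]:
  fixes A :: "complex mat"
  shows "i < dim_col A \<Longrightarrow> j < dim_row A \<Longrightarrow> mat_adjoint A $$ (i, j) = cnj (A $$ (j, i))"
  unfolding mat_adjoint_def by (simp add: mat_of_rows_index)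

lemma mat_adjoint_mat_adjoint [simp]: "mat_adjoint (mat_adjoint A) = (A :: complex mat)"
  by (rule eq_matI) auto

lemma mat_adjoint_one [simp]: "mat_adjoint (1\<^sub>m n) = (1\<^sub>m n :: complex mat)"
  by (rule eq_matI) auto

lemma mat_adjoint_add:
  "A \<in> carrier_mat m n \<Longrightarrow> B \<in> carrier_mat m n \<Longrightarrow>
    mat_adjoint (A + B) = mat_adjoint A + mat_adjoint (B :: complex mat)"
  by (rule eq_matI) auto

lemma mat_adjoint_minus:
  "A \<in> carrier_mat m n \<Longrightarrow> B \<in> carrier_mat m n \<Longrightarrow>
    mat_adjoint (A - B) = mat_adjoint A - mat_adjoint (B :: complex mat)"
  by (rule eq_matI) auto

lemma mat_adjoint_mult:
  fixes A B :: "complex mat"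
  assumes A: "A \<in> carrier_mat m n" and B: "B \<in> carrier_mat n p"
  shows "mat_adjoint (A * B) = mat_adjoint B * mat_adjoint A"
proof (rule eq_matI)
  fix i j assume "i < dim_row (mat_adjoint B * mat_adjoint A)" "j < dim_col (mat_adjoint B * mat_adjoint A)"
  with A B show "mat_adjoint (A * B) $$ (i, j) = (mat_adjoint B * mat_adjoint A) $$ (i, j)"
    by (simp add: scalar_prod_def mult.commute)
qed (use A B in auto)

lemma mult_mat_vec_inner_mat_adjoint:
  fixes M :: "complex mat"
  assumes M: "M \<in> carrier_mat m n" and v: "v \<in> carrier_vec n" and w: "w \<in> carrier_vec m"
  shows "(M *\<^sub>v v) \<bullet>c w = v \<bullet>c (mat_adjoint M *\<^sub>v w)"
proof -
  have "(M *\<^sub>v v) \<bullet>c w = (\<Sum>i<m. \<Sum>k<n. v $ k * (M $$ (i, k) * cnj (w $ i)))"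
    using M v w by (simp add: scalar_prod_def lessThan_atLeast0 sum_distrib_left sum_distrib_right mult_ac)
  also have "\<dots> = (\<Sum>k<n. \<Sum>i<m. v $ k * (M $$ (i, k) * cnj (w $ i)))"
    by (rule sum.swap)
  also have "\<dots> = v \<bullet>c (mat_adjoint M *\<^sub>v w)"
    using M v w by (simp add: scalar_prod_def lessThan_atLeast0 sum_distrib_left)
  finally show ?thesis .
qed

lemma sum_lessThan_mult: "(\<Sum>k < a * b. f k) = (\<Sum>i < a. \<Sum>j < b. f (i * b + j :: nat))"
proof (induction a)
  case (Suc a)
  have "{..<Suc a * b} = {..<a * b} \<union> {a * b..<a * b + b}" by auto
  then have "(\<Sum>k < Suc a * b. f k) = (\<Sum>k < a * b. f k) + (\<Sum>k \<in> {a * b..<a * b + b}. f k)"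
    by (metis finite_atLeastLessThan finite_lessThan ivl_disj_int_one(2) sum.union_disjoint)
  also have "(\<Sum>k \<in> {a * b..<a * b + b}. f k) = (\<Sum>j < b. f (a * b + j))"
    by (rule sum.reindex_bij_witness[of _ "\<lambda>j. a * b + j" "\<lambda>k. k - a * b"]) auto
  finally show ?case using Suc by (simp add: add.commute)
qed simp

lemma mult_add_less_mult:
  assumes "i < a" and "j < b"
  shows "i * b + j < a * (b :: nat)"
proof -
  have "i * b + j < Suc i * b" using assms(2) by simp
  also have "\<dots> \<le> a * b" using assms(1) by (intro mult_le_mono1) simp
  finally show ?thesis .
qed

lemma dim_row_kron [simp]: "dim_row (kron A B) = dim_row A * dim_row B"
  and dim_col_kron [simp]: "dim_col (kron A B) = dim_col A * dim_col B"
  unfolding kron_def by auto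

lemma kron_carrier_mat [simp]:
  "A \<in> carrier_mat a b \<Longrightarrow> B \<in> carrier_mat c d \<Longrightarrow> kron A B \<in> carrier_mat (a * c) (b * d)"
  by auto

lemma index_kron:
  "i < dim_row A * dim_row B \<Longrightarrow> j < dim_col A * dim_col B \<Longrightarrow>
    kron A B $$ (i, j) = A $$ (i div dim_row B, j div dim_col B) * B $$ (i mod dim_row B, j mod dim_col B)"
  unfolding kron_def by auto

lemma div_mod_less_of_less_mult:
  assumes "i < a * (b :: nat)"
  shows "i div b < a" and "i mod b < b"
proof -
  show "i div b < a" using assms by (rule less_mult_imp_div_less)
  have "b \<noteq> 0" using assms by (metis mult_0_right not_less_zero)
  then show "i mod b < b" by simp
qed

lemma kron_mult:
  assumes A: "A \<in> carrier_mat a b" and B: "B \<in> carrier_mat c d"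
    and C: "C \<in> carrier_mat b e" and D: "D \<in> carrier_mat d f"
  shows "kron A B * kron C D = kron (A * C) (B * D)"
proof (rule eq_matI)
  fix i j assume "i < dim_row (kron (A * C) (B * D))" "j < dim_col (kron (A * C) (B * D))"
  then have i: "i < a * c" and j: "j < e * f" using A B C D by auto
  note bounds = div_mod_less_of_less_mult[OF i] div_mod_less_of_less_mult[OF j]
  have "(kron A B * kron C D) $$ (i, j)
      = (\<Sum>k1 < b. \<Sum>k2 < d. kron A B $$ (i, k1 * d + k2) * kron C D $$ (k1 * d + k2, j))"
    using A B C D i j by (simp add: scalar_prod_def atLeast0LessThan sum_lessThan_mult)
  also have "\<dots> = (\<Sum>k1 < b. \<Sum>k2 < d.
      (A $$ (i div c, k1) * C $$ (k1, j div f)) * (B $$ (i mod c, k2) * D $$ (k2, j mod f)))"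
    using A B C D i j by (intro sum.cong refl) (simp add: index_kron mult_add_less_mult mult_ac)
  also have "\<dots> = kron (A * C) (B * D) $$ (i, j)"
    using A B C D i j bounds
    by (simp add: index_kron scalar_prod_def lessThan_atLeast0 sum_product)
  finally show "(kron A B * kron C D) $$ (i, j) = kron (A * C) (B * D) $$ (i, j)" .
qed (use A B C D in auto)

lemma mat_adjoint_kron:
  assumes "A \<in> carrier_mat a b" and "B \<in> carrier_mat c d"
  shows "mat_adjoint (kron A B) = kron (mat_adjoint A) (mat_adjoint B)"
proof (rule eq_matI)
  fix i j assume "i < dim_row (kron (mat_adjoint A) (mat_adjoint B))"
    "j < dim_col (kron (mat_adjoint A) (mat_adjoint B))"
  then have "i < b * d" "j < a * c" using assms by auto
  then show "mat_adjoint (kron A B) $$ (i, j) = kron (mat_adjoint A) (mat_adjoint B) $$ (i, j)"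
    using assms div_mod_less_of_less_mult by (simp add: index_kron)
qed (use assms in auto)

lemma kron_one: "kron (1\<^sub>m a) (1\<^sub>m b) = 1\<^sub>m (a * b)"
proof (rule eq_matI)
  fix i j assume "i < dim_row (1\<^sub>m (a * b) :: complex mat)" "j < dim_col (1\<^sub>m (a * b) :: complex mat)"
  then have i: "i < a * b" and j: "j < a * b" by auto
  have "i = j \<longleftrightarrow> i div b = j div b \<and> i mod b = j mod b"
    by (metis div_mult_mod_eq)
  then show "kron (1\<^sub>m a) (1\<^sub>m b) $$ (i, j) = 1\<^sub>m (a * b) $$ (i, j)"
    using i j div_mod_less_of_less_mult[OF i] div_mod_less_of_less_mult[OF j] by (simp add: index_kron)
qed auto

lemma add_kron:
  assumes "A \<in> carrier_mat a b" and "A' \<in> carrier_mat a b"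
  shows "kron (A + A') B = kron A B + kron A' B"
proof (rule eq_matI)
  fix i j assume "i < dim_row (kron A B + kron A' B)" "j < dim_col (kron A B + kron A' B)"
  then have "i < a * dim_row B" "j < b * dim_col B" using assms by auto
  then show "kron (A + A') B $$ (i, j) = (kron A B + kron A' B) $$ (i, j)"
    using assms div_mod_less_of_less_mult by (simp add: index_kron distrib_right)
qed (use assms in auto)

lemma mtrace_mult_comm:
  fixes A B :: "complex mat"
  assumes A: "A \<in> carrier_mat m n" and B: "B \<in> carrier_mat n m"
  shows "mtrace (A * B) = mtrace (B * A)"
proof -
  have "mtrace (A * B) = (\<Sum>i < m. \<Sum>k < n. A $$ (i, k) * B $$ (k, i))"
    using A B by (simp add: mtrace_def scalar_prod_def lessThan_atLeast0)
  also have "\<dots> = (\<Sum>k < n. \<Sum>i < m. B $$ (k, i) * A $$ (i, k))"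
    by (subst sum.swap) (simp add: mult.commute)
  also have "\<dots> = mtrace (B * A)"
    using A B by (simp add: mtrace_def scalar_prod_def lessThan_atLeast0)
  finally show ?thesis .
qed

lemma mtrace_minus:
  "A \<in> carrier_mat n n \<Longrightarrow> B \<in> carrier_mat n n \<Longrightarrow> mtrace (A - B) = mtrace A - mtrace B"
  by (simp add: mtrace_def sum_subtractf)

lemma conj_by_carrier_mat [simp]:
  "C \<in> carrier_mat m n \<Longrightarrow> M \<in> carrier_mat n n \<Longrightarrow> conj_by C M \<in> carrier_mat m m"
  unfolding conj_by_def by auto

lemma conj_by_one_left: "M \<in> carrier_mat n n \<Longrightarrow> conj_by (1\<^sub>m n) M = M"
  unfolding conj_by_def by simp

lemma conj_by_one: "C \<in> carrier_mat m n \<Longrightarrow> conj_by C (1\<^sub>m n) = C * mat_adjoint C"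
  unfolding conj_by_def by simp

lemma conj_by_conj_by:
  assumes A: "A \<in> carrier_mat k m" and B: "B \<in> carrier_mat m n" and M: "M \<in> carrier_mat n n"
  shows "conj_by A (conj_by B M) = conj_by (A * B) M"
proof -
  have "A * (B * M * mat_adjoint B) * mat_adjoint A = A * (B * M * mat_adjoint B * mat_adjoint A)"
    using A B M by (intro assoc_mult_mat[of _ k m _ m _ k]) auto
  also have "B * M * mat_adjoint B * mat_adjoint A = (B * M) * (mat_adjoint B * mat_adjoint A)"
    using A B M by (intro assoc_mult_mat[of _ m n _ m _ k]) auto
  also have "A * ((B * M) * (mat_adjoint B * mat_adjoint A)) = A * (B * M) * (mat_adjoint B * mat_adjoint A)"
    using A B M by (intro assoc_mult_mat[of _ k m _ n _ k, symmetric]) auto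
  also have "A * (B * M) = A * B * M"
    using A B M by (intro assoc_mult_mat[of _ k m _ n _ n, symmetric]) auto
  finally have "A * (B * M * mat_adjoint B) * mat_adjoint A = A * B * M * (mat_adjoint B * mat_adjoint A)" .
  then show ?thesis
    unfolding conj_by_def using A B by (simp add: mat_adjoint_mult)
qed

lemma conj_by_minus:
  assumes C: "C \<in> carrier_mat m n" and M: "M \<in> carrier_mat n n" and N: "N \<in> carrier_mat n n"
  shows "conj_by C (M - N) = conj_by C M - conj_by C N"
  unfolding conj_by_def using C M N
  by (simp add: mult_minus_distrib_mat[of _ m n] minus_mult_distrib_mat[of _ m n _ _ m])

lemma conj_by_kron:
  assumes A: "A \<in> carrier_mat a b" and B: "B \<in> carrier_mat c d"
    and X: "X \<in> carrier_mat b b" and Y: "Y \<in> carrier_mat d d"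
  shows "conj_by (kron A B) (kron X Y) = kron (conj_by A X) (conj_by B Y)"
  unfolding conj_by_def using A B X Y
  by (simp add: mat_adjoint_kron[OF A B] kron_mult[of _ a b _ c d] kron_mult[of _ a b _ c d _ a _ c])

lemma mtrace_conj_by:
  assumes C: "C \<in> carrier_mat m n" and M: "M \<in> carrier_mat n n"
  shows "mtrace (conj_by C M) = mtrace (M * (mat_adjoint C * C))"
proof -
  have "mtrace (conj_by C M) = mtrace (mat_adjoint C * (C * M))"
    unfolding conj_by_def using C M by (intro mtrace_mult_comm[of _ m n]) auto
  also have "\<dots> = mtrace ((mat_adjoint C * C) * M)"
    using C M by (simp add: assoc_mult_mat[of _ n m _ n _ n])
  also have "\<dots> = mtrace (M * (mat_adjoint C * C))"
    using C M by (intro mtrace_mult_comm[of _ n n]) auto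
  finally show ?thesis .
qed

lemma psd_carrier_mat: "psd n A \<Longrightarrow> A \<in> carrier_mat n n"
  unfolding psd_def by simp

lemma psd_conj_by:
  fixes M C :: "complex mat"
  assumes M: "psd n M" and C: "C \<in> carrier_mat m n"
  shows "psd m (conj_by C M)"
proof -
  have Mc: "M \<in> carrier_mat n n" and Mh: "mat_adjoint M = M"
    and Mp: "\<And>u. u \<in> carrier_vec n \<Longrightarrow> 0 \<le> Re ((M *\<^sub>v u) \<bullet>c u)"
    using M unfolding psd_def by auto
  have "mat_adjoint (C * M * mat_adjoint C) = C * (M * mat_adjoint C)"
    using Mc C Mh by (simp add: mat_adjoint_mult[of _ m n _ m] mat_adjoint_mult[of _ m n _ n])
  then have herm: "mat_adjoint (conj_by C M) = conj_by C M"
    unfolding conj_by_def using Mc C by (simp add: assoc_mult_mat[of _ m n _ n _ m])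
  have "0 \<le> Re ((conj_by C M *\<^sub>v v) \<bullet>c v)" if v: "v \<in> carrier_vec m" for v
  proof -
    define u where "u = mat_adjoint C *\<^sub>v v"
    have u: "u \<in> carrier_vec n"
      unfolding u_def using mult_mat_vec_carrier[OF mat_adjoint_carrier_mat[OF C] v] .
    have "conj_by C M *\<^sub>v v = C *\<^sub>v (M *\<^sub>v u)"
      unfolding conj_by_def using Mc C v u unfolding u_def
      by (simp add: assoc_mult_mat_vec[of _ m n _ m] assoc_mult_mat_vec[of _ m n _ n])
    moreover have "(C *\<^sub>v (M *\<^sub>v u)) \<bullet>c v = (M *\<^sub>v u) \<bullet>c u"
      using mult_mat_vec_inner_mat_adjoint[OF C _ v, of "M *\<^sub>v u"] Mc u unfolding u_def by simp
    ultimately have "(conj_by C M *\<^sub>v v) \<bullet>c v = (M *\<^sub>v u) \<bullet>c u" by simp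
    then show ?thesis using Mp[OF u] by simp
  qed
  then show ?thesis unfolding psd_def using Mc C herm by auto
qed

lemma psd_add:
  fixes A B :: "complex mat"
  assumes A: "psd n A" and B: "psd n B"
  shows "psd n (A + B)"
proof -
  have Ac: "A \<in> carrier_mat n n" and Bc: "B \<in> carrier_mat n n"
    using A B by (simp_all add: psd_carrier_mat)
  have "((A + B) *\<^sub>v v) \<bullet>c v = (A *\<^sub>v v) \<bullet>c v + (B *\<^sub>v v) \<bullet>c v" if "v \<in> carrier_vec n" for v
    using Ac Bc that by (simp add: add_mult_distrib_mat_vec[of _ n n] add_scalar_prod_distrib[of _ n])
  then show ?thesis using A B Ac Bc unfolding psd_def by (auto simp: mat_adjoint_add)
qed

lemma psd_mtrace_nonneg:
  assumes "psd n A"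
  shows "0 \<le> Re (mtrace A)"
proof -
  have "0 \<le> Re (A $$ (i, i))" if i: "i < n" for i
  proof -
    have "conjugate (unit_vec n i) = (unit_vec n i :: complex vec)"
      by (rule eq_vecI) (auto simp: unit_vec_def)
    then have "(A *\<^sub>v unit_vec n i) \<bullet>c unit_vec n i = A $$ (i, i)"
      using psd_carrier_mat[OF assms] i by (simp add: scalar_prod_right_unit)
    then show ?thesis using assms i unfolding psd_def by (metis unit_vec_carrier)
  qed
  then show ?thesis
    using psd_carrier_mat[OF assms] unfolding mtrace_def by (auto simp: Re_sum intro: sum_nonneg)
qed

lemma psd_kron_one_left:
  fixes Y :: "complex mat"
  assumes Y: "psd n Y"
  shows "psd (m * n) (kron (1\<^sub>m m) Y)"
proof -
  let ?K = "kron (1\<^sub>m m) Y"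
  have Yc: "Y \<in> carrier_mat n n" and Yh: "mat_adjoint Y = Y"
    and Yp: "\<And>u. u \<in> carrier_vec n \<Longrightarrow> 0 \<le> Re ((Y *\<^sub>v u) \<bullet>c u)"
    using Y unfolding psd_def by auto
  have herm: "mat_adjoint ?K = ?K"
    using Yc Yh by (simp add: mat_adjoint_kron[of _ m m _ n n])
  have K: "(\<Sum>a' < m. \<Sum>b' < n. ?K $$ (a * n + b, a' * n + b') * w $ (a' * n + b'))
      = (\<Sum>b' < n. Y $$ (b, b') * w $ (a * n + b'))" if "a < m" "b < n" for a b and w :: "complex vec"
  proof -
    have "(\<Sum>a' < m. \<Sum>b' < n. ?K $$ (a * n + b, a' * n + b') * w $ (a' * n + b'))
        = (\<Sum>a' < m. if a' = a then \<Sum>b' < n. Y $$ (b, b') * w $ (a' * n + b') else 0)"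
      using that Yc by (intro sum.cong refl) (auto simp: index_kron mult_add_less_mult)
    then show ?thesis using that(1) by simp
  qed
  have "0 \<le> Re ((?K *\<^sub>v v) \<bullet>c v)" if v: "v \<in> carrier_vec (m * n)" for v
  proof -
    define blk where "blk a = vec n (\<lambda>b. v $ (a * n + b))" for a
    have "(?K *\<^sub>v v) \<bullet>c v = (\<Sum>a < m. \<Sum>b < n.
        (\<Sum>a' < m. \<Sum>b' < n. ?K $$ (a * n + b, a' * n + b') * v $ (a' * n + b')) * cnj (v $ (a * n + b)))"
      using Yc v by (simp add: scalar_prod_def atLeast0LessThan sum_lessThan_mult mult_add_less_mult)
    also have "\<dots> = (\<Sum>a < m. \<Sum>b < n. (\<Sum>b' < n. Y $$ (b, b') * v $ (a * n + b')) * cnj (v $ (a * n + b)))"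
      by (intro sum.cong refl) (simp add: K)
    also have "\<dots> = (\<Sum>a < m. (Y *\<^sub>v blk a) \<bullet>c blk a)"
      using Yc by (simp add: blk_def scalar_prod_def atLeast0LessThan)
    finally have "Re ((?K *\<^sub>v v) \<bullet>c v) = (\<Sum>a < m. Re ((Y *\<^sub>v blk a) \<bullet>c blk a))"
      by (simp add: Re_sum)
    also have "\<dots> \<ge> 0" by (intro sum_nonneg Yp) (simp add: blk_def)
    finally show ?thesis .
  qed
  then show ?thesis unfolding psd_def using Yc herm by auto
qed

lemma isometry_kron:
  assumes "isometry m n V" and "isometry m' n' W"
  shows "isometry (m * m') (n * n') (kron V W)"
proof -
  have V: "V \<in> carrier_mat m n" "mat_adjoint V * V = 1\<^sub>m n"
    and W: "W \<in> carrier_mat m' n'" "mat_adjoint W * W = 1\<^sub>m n'"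
    using assms unfolding isometry_def by auto
  have "mat_adjoint (kron V W) * kron V W = kron (mat_adjoint V * V) (mat_adjoint W * W)"
    using V W by (simp add: mat_adjoint_kron[of _ m n _ m' n'] kron_mult[of _ n m _ n' m'])
  then show ?thesis unfolding isometry_def using V W by (simp add: kron_one)
qed

lemma isometry_complement_projection:
  assumes "isometry m n V"
  defines "P \<equiv> 1\<^sub>m m - V * mat_adjoint V"
  shows "P \<in> carrier_mat m m" and "mat_adjoint P = P" and "P * P = P"
proof -
  have V: "V \<in> carrier_mat m n" and VV: "mat_adjoint V * V = 1\<^sub>m n"
    using assms unfolding isometry_def by auto
  let ?Q = "V * mat_adjoint V"
  have Q: "?Q \<in> carrier_mat m m" using V by simp
  show "P \<in> carrier_mat m m" unfolding P_def using Q by (rule minus_carrier_mat)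
  have "mat_adjoint ?Q = ?Q" using V by (simp add: mat_adjoint_mult[of _ m n _ m])
  then show "mat_adjoint P = P" unfolding P_def using Q by (simp add: mat_adjoint_minus[of _ m m])
  have "?Q * ?Q = V * ((mat_adjoint V * V) * mat_adjoint V)"
    using V by (simp add: assoc_mult_mat[of _ m n _ m _ m] assoc_mult_mat[of _ n m _ n _ m])
  then have QQ: "?Q * ?Q = ?Q" using V VV by simp
  have "P * P = (1\<^sub>m m - ?Q) - (?Q - ?Q * ?Q)"
    unfolding P_def using Q
    by (simp add: minus_carrier_mat minus_mult_distrib_mat[of _ m m _ _ m] mult_minus_distrib_mat[of _ m m _ m]
        right_mult_one_mat[OF Q] left_mult_one_mat[OF Q])
  then show "P * P = P"
    unfolding QQ P_def using Q by (intro eq_matI) auto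
qed

lemma mtrace_conj_by_isometry:
  assumes "isometry m n W" and "M \<in> carrier_mat n n"
  shows "mtrace (conj_by W M) = mtrace M"
proof -
  have "W \<in> carrier_mat m n" and "mat_adjoint W * W = 1\<^sub>m n"
    using assms(1) unfolding isometry_def by auto
  then show ?thesis using assms(2) by (simp add: mtrace_conj_by)
qed

lemma mtrace_conj_by_adjoint_isometry_le:
  assumes W: "isometry m n W" and X: "psd m X"
  shows "Re (mtrace (conj_by (mat_adjoint W) X)) \<le> Re (mtrace X)"
proof -
  define P where "P = 1\<^sub>m m - W * mat_adjoint W"
  note P = isometry_complement_projection[OF W, folded P_def]
  have Wc: "W \<in> carrier_mat m n" using W unfolding isometry_def by simp
  then have WW: "W * mat_adjoint W \<in> carrier_mat m m" by simp
  have Xc: "X \<in> carrier_mat m m" using X by (rule psd_carrier_mat)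
  have "mtrace (conj_by P X) = mtrace (X * P)"
    using P Xc by (simp add: mtrace_conj_by)
  also have "X * P = X - X * (W * mat_adjoint W)"
    unfolding P_def using WW Xc by (simp add: mult_minus_distrib_mat[of _ m m _ m])
  also have "mtrace \<dots> = mtrace X - mtrace (conj_by (mat_adjoint W) X)"
    using Wc Xc by (simp add: mtrace_minus[of _ m] mtrace_conj_by[of _ n m])
  finally show ?thesis
    using psd_mtrace_nonneg[OF psd_conj_by[OF X P(1)]] by simp
qed

definition Hmin_feasible :: "nat \<Rightarrow> nat \<Rightarrow> complex mat \<Rightarrow> complex mat \<Rightarrow> bool" where
  "Hmin_feasible dR dA \<Omega> X \<longleftrightarrow> psd dA X \<and> psd (dR * dA) (kron (1\<^sub>m dR) X - \<Omega>)"

lemma Hmin_eq_feasible: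
  "Hmin dR dA \<Omega> = - log 2 (Inf {Re (mtrace X) | X. Hmin_feasible dR dA \<Omega> X})"
  unfolding Hmin_def Hmin_feasible_def ..

lemma Hmin_feasible_conj_by_kron:
  assumes V: "isometry dR' dR V" and W: "isometry dA' dA W"
    and \<Omega>: "\<Omega> \<in> carrier_mat (dR * dA) (dR * dA)" and X: "Hmin_feasible dR dA \<Omega> X"
  shows "Hmin_feasible dR' dA' (conj_by (kron V W) \<Omega>) (conj_by W X)"
proof -
  have Vc: "V \<in> carrier_mat dR' dR" and Wc: "W \<in> carrier_mat dA' dA"
    using V W unfolding isometry_def by auto
  have Xp: "psd dA X" and F: "psd (dR * dA) (kron (1\<^sub>m dR) X - \<Omega>)"
    using X unfolding Hmin_feasible_def by auto
  have Xc: "X \<in> carrier_mat dA dA" using Xp by (rule psd_carrier_mat)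
  define P where "P = 1\<^sub>m dR' - V * mat_adjoint V"
  note P = isometry_complement_projection[OF V, folded P_def]
  define X' where "X' = conj_by W X"
  define K where "K = kron V W"
  have X'c: "X' \<in> carrier_mat dA' dA'" unfolding X'_def using Wc Xc by simp
  have Kc: "K \<in> carrier_mat (dR' * dA') (dR * dA)" unfolding K_def using Vc Wc by simp
  have "kron (1\<^sub>m dR') X' - conj_by K \<Omega> = kron P X' + (kron (V * mat_adjoint V) X' - conj_by K \<Omega>)"
  proof -
    have "1\<^sub>m dR' = P + V * mat_adjoint V" unfolding P_def using Vc by (intro eq_matI) auto
    then have "kron (1\<^sub>m dR') X' = kron P X' + kron (V * mat_adjoint V) X'"
      using P(1) Vc by (simp add: add_kron[of _ dR' dR'])
    then show ?thesis using P(1) Vc X'c conj_by_carrier_mat[OF Kc \<Omega>] by (auto intro!: eq_matI)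
  qed
  also have "kron P X' = conj_by (kron P W) (kron (1\<^sub>m dR') X)"
    unfolding X'_def using P Wc Xc by (simp add: conj_by_kron[of _ dR' dR' _ dA' dA] conj_by_one)
  also have "kron (V * mat_adjoint V) X' - conj_by K \<Omega> = conj_by K (kron (1\<^sub>m dR) X - \<Omega>)"
    unfolding X'_def K_def using Vc Wc Xc \<Omega>
    by (simp add: conj_by_minus[of _ "dR' * dA'" "dR * dA"] conj_by_kron[of _ dR' dR _ dA' dA] conj_by_one)
  finally have "kron (1\<^sub>m dR') X' - conj_by K \<Omega>
      = conj_by (kron P W) (kron (1\<^sub>m dR') X) + conj_by K (kron (1\<^sub>m dR) X - \<Omega>)" .
  moreover have "psd (dR' * dA') (conj_by (kron P W) (kron (1\<^sub>m dR') X))"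
    using psd_conj_by[OF psd_kron_one_left[OF Xp, of dR'], of "kron P W"] P(1) Wc by simp
  moreover have "psd (dR' * dA') (conj_by K (kron (1\<^sub>m dR) X - \<Omega>))"
    using F Kc by (rule psd_conj_by)
  moreover have "psd dA' X'" unfolding X'_def using Xp Wc by (rule psd_conj_by)
  ultimately show ?thesis
    unfolding Hmin_feasible_def X'_def K_def by (simp add: psd_add)
qed

lemma Hmin_feasible_conj_by_adjoint:
  assumes V: "isometry dR' dR V" and W: "isometry dA' dA W"
    and \<Omega>: "\<Omega> \<in> carrier_mat (dR * dA) (dR * dA)"
    and X': "Hmin_feasible dR' dA' (conj_by (kron V W) \<Omega>) X'"
  shows "Hmin_feasible dR dA \<Omega> (conj_by (mat_adjoint W) X')"
proof -
  have Vc: "V \<in> carrier_mat dR' dR" and VV: "mat_adjoint V * V = 1\<^sub>m dR"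
    and Wc: "W \<in> carrier_mat dA' dA"
    using V W unfolding isometry_def by auto
  define K where "K = kron V W"
  have Kc: "K \<in> carrier_mat (dR' * dA') (dR * dA)" and KK: "mat_adjoint K * K = 1\<^sub>m (dR * dA)"
    using isometry_kron[OF V W] unfolding K_def isometry_def by auto
  have X'p: "psd dA' X'" and F: "psd (dR' * dA') (kron (1\<^sub>m dR') X' - conj_by K \<Omega>)"
    using X' unfolding Hmin_feasible_def K_def by auto
  have X'c: "X' \<in> carrier_mat dA' dA'" using X'p by (rule psd_carrier_mat)
  have "conj_by (mat_adjoint K) (kron (1\<^sub>m dR') X' - conj_by K \<Omega>)
      = conj_by (mat_adjoint K) (kron (1\<^sub>m dR') X') - conj_by (mat_adjoint K * K) \<Omega>"
    using Kc X'c \<Omega>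
    by (simp add: conj_by_minus[of _ "dR * dA" "dR' * dA'"] conj_by_conj_by[of _ "dR * dA" "dR' * dA'" _ "dR * dA"])
  also have "\<dots> = kron (1\<^sub>m dR) (conj_by (mat_adjoint W) X') - \<Omega>"
    unfolding KK unfolding K_def using Vc VV Wc X'c \<Omega>
    by (simp add: mat_adjoint_kron[OF Vc Wc] conj_by_kron[of _ dR dR' _ dA dA']
        conj_by_one[OF mat_adjoint_carrier_mat[OF Vc]] conj_by_one_left)
  finally have "psd (dR * dA) (kron (1\<^sub>m dR) (conj_by (mat_adjoint W) X') - \<Omega>)"
    using psd_conj_by[OF F mat_adjoint_carrier_mat[OF Kc]] by simp
  moreover have "psd dA (conj_by (mat_adjoint W) X')"
    using X'p Wc by (simp add: psd_conj_by)
  ultimately show ?thesis unfolding Hmin_feasible_def by simp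
qed

lemma cInf_eq_if_subset_dominated:
  fixes S T :: "'a :: conditionally_complete_linorder set"
  assumes "S \<subseteq> T" and "\<And>t. t \<in> T \<Longrightarrow> \<exists>s \<in> S. s \<le> t" and "bdd_below T"
  shows "Inf S = Inf T"
proof (cases "S = {}")
  case True
  then show ?thesis using assms(2) by fastforce
next
  case False
  have "bdd_below S" using assms(3,1) by (rule bdd_below_mono)
  have "Inf T \<le> Inf S" using False assms(3,1) by (rule cInf_superset_mono)
  moreover have "Inf S \<le> Inf T"
  proof (rule cInf_greatest)
    show "T \<noteq> {}" using False assms(1) by blast
    show "Inf S \<le> t" if "t \<in> T" for t
      using assms(2)[OF that] cInf_lower[OF _ \<open>bdd_below S\<close>] order_trans by blast
  qed
  ultimately show ?thesis by simp
qed

lemma Hmin_conj_by_kron_isometry: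
  assumes V: "isometry dR' dR V" and W: "isometry dA' dA W"
    and \<Omega>: "\<Omega> \<in> carrier_mat (dR * dA) (dR * dA)"
  shows "Hmin dR' dA' (conj_by (kron V W) \<Omega>) = Hmin dR dA \<Omega>"
proof -
  let ?S = "{Re (mtrace X) | X. Hmin_feasible dR dA \<Omega> X}"
  let ?T = "{Re (mtrace X') | X'. Hmin_feasible dR' dA' (conj_by (kron V W) \<Omega>) X'}"
  have "?S \<subseteq> ?T"
  proof
    fix x assume "x \<in> ?S"
    then obtain X where x: "x = Re (mtrace X)" and X: "Hmin_feasible dR dA \<Omega> X" by auto
    have "mtrace (conj_by W X) = mtrace X"
      using W psd_carrier_mat X unfolding Hmin_feasible_def by (blast intro: mtrace_conj_by_isometry)
    then show "x \<in> ?T"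
      using Hmin_feasible_conj_by_kron[OF V W \<Omega> X] x by (metis (mono_tags, lifting) mem_Collect_eq)
  qed
  moreover have "\<exists>x \<in> ?S. x \<le> t" if "t \<in> ?T" for t
  proof -
    obtain X' where t: "t = Re (mtrace X')" and X': "Hmin_feasible dR' dA' (conj_by (kron V W) \<Omega>) X'"
      using \<open>t \<in> ?T\<close> by auto
    have "Re (mtrace (conj_by (mat_adjoint W) X')) \<le> t"
      using mtrace_conj_by_adjoint_isometry_le[OF W] X' t unfolding Hmin_feasible_def by blast
    then show ?thesis using Hmin_feasible_conj_by_adjoint[OF V W \<Omega> X'] by blast
  qed
  moreover have "bdd_below ?T"
    unfolding bdd_below_def Hmin_feasible_def using psd_mtrace_nonneg by blast
  ultimately have "Inf ?S = Inf ?T" by (rule cInf_eq_if_subset_dominated)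
  then show ?thesis unfolding Hmin_eq_feasible by simp
qed

theorem lemma1:
  fixes mu :: "'g :: {topological_group_add, t2_space} measure"
    and UR UA UR' UA' :: "'g \<Rightarrow> complex mat"
    and dR dA dR' dA' :: nat
    and V W :: "complex mat"
  assumes "haar_prob mu"
    and "unitary_rep dR UR" and "unitary_rep dA UA"
    and "unitary_rep dR' UR'" and "unitary_rep dA' UA'"
    and "isometry dR' dR V" and "isometry dA' dA W"
    and "\<forall>M \<in> carrier_mat (dR * dA) (dR * dA).
           conj_by (kron V W) (twirl mu (\<lambda>g. kron (UR g) (UA g)) (dR * dA) M)
           = twirl mu (\<lambda>g. kron (UR' g) (UA' g)) (dR' * dA') (conj_by (kron V W) M)"
  shows "\<forall>\<eta> \<rho>. is_state dR \<eta> \<and> is_state dA \<rho> \<longrightarrow>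
           Hq mu UR' UA' dR' dA' (conj_by V \<eta>) (conj_by W \<rho>) = Hq mu UR UA dR dA \<eta> \<rho>"
proof (intro allI impI)
  fix \<eta> \<rho> assume "is_state dR \<eta> \<and> is_state dA \<rho>"
  then have \<eta>: "\<eta> \<in> carrier_mat dR dR" and \<rho>: "\<rho> \<in> carrier_mat dA dA"
    unfolding is_state_def psd_def by auto
  have V: "V \<in> carrier_mat dR' dR" and W: "W \<in> carrier_mat dA' dA"
    using assms(6,7) unfolding isometry_def by auto
  let ?\<Omega> = "twirl mu (\<lambda>g. kron (UR g) (UA g)) (dR * dA) (kron \<eta> \<rho>)"
  have "Hq mu UR' UA' dR' dA' (conj_by V \<eta>) (conj_by W \<rho>)
      = Hmin dR' dA' (twirl mu (\<lambda>g. kron (UR' g) (UA' g)) (dR' * dA') (conj_by (kron V W) (kron \<eta> \<rho>)))"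
    unfolding Hq_def using V W \<eta> \<rho> by (simp add: conj_by_kron)
  also have "\<dots> = Hmin dR' dA' (conj_by (kron V W) ?\<Omega>)"
    using assms(8) \<eta> \<rho> by simp
  also have "\<dots> = Hmin dR dA ?\<Omega>"
    using assms(6,7) by (rule Hmin_conj_by_kron_isometry) (simp add: twirl_def)
  also have "\<dots> = Hq mu UR UA dR dA \<eta> \<rho>"
    unfolding Hq_def ..
  finally show "Hq mu UR' UA' dR' dA' (conj_by V \<eta>) (conj_by W \<rho>) = Hq mu UR UA dR dA \<eta> \<rho>" .
qed

end
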